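(* Let $n\ge 1$ and $k\ge 3$ be integers and set $p:=k-2>0$. Let $\{v_1,\dots,v_n\}$ be an orthonormal basis of $\mathbb{R}^n$, $V=[v_1,\dots,v_n]$, and let $\lambda_1,\dots,\lambda_n,\kappa_1,\dots,\kappa_n\in\mathbb{R}$. Define the $k$th-order tensor $\mathcal A=\sum_{r=1}^n \lambda_r v_r^{\otimes k}$ and the matrix $K=\sum_{r=1}^n\kappa_r v_r v_r^\top$, and consider the closed-loop system $$\dot x = Kx+\mathcal A x^{k-1},\qquad x(t)\in\mathbb{R}^n.$$ Define the modal coordinates $y(t):=V^\top x(t)$, i.e. $y_r(t)=v_r^\top x(t)$, and $y_{r,0}:=y_r(0)=v_r^\top x(0)$. Then the dynamics decouple as $$\dot y_r=\kappa_r y_r+\lambda_r y_r^{k-1},\qquad r=1,\dots,n,$$ and the state is reconstructed by $x(t)=\sum_{r=1}^n y_r(t)v_r$. Moreover: (i) If $\kappa_r\neq 0$, then on any time interval on which $y_r(t)\neq 0$, the trajectory satisfies $$y_r(t)=y_{r,0}\Big[e^{-p\kappa_r t}-\frac{\lambda_r}{\kappa_r}\,y_{r,0}^{p}\big(1-e^{-p\kappa_r t}\big)\Big]^{-1/p},$$ valid on the maximal interval on which the bracketed term is positive. (ii) If $\kappa_r=0$, then on any time interval on which $y_r(t)\neq 0$, $$y_r(t)=y_{r,0}\big(1-p\lambda_r y_{r,0}^{p}\,t\big)^{-1/p},$$ valid on the maximal interval on which $1-p\lambda_r y_{r,0}^p t>0$.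
   Context: For $v\in\mathbb{R}^n$, $v^{\otimes k}$ is the $k$th-order tensor with entries $(v^{\otimes k})_{i_1\cdots i_k}=v_{i_1}\cdots v_{i_k}$. For a $k$th-order tensor $\mathcal A=(a_{i_1\cdots i_k})$ and $x\in\mathbb{R}^n$, $\mathcal A x^{k-1}\in\mathbb{R}^n$ is defined by $(\mathcal A x^{k-1})_i=\sum_{i_2,\dots,i_k=1}^n a_{i i_2\cdots i_k}x_{i_2}\cdots x_{i_k}$. A tensor of the form $\sum_r\lambda_r v_r^{\otimes k}$ with $\{v_r\}$ orthonormal is called orthogonally decomposable (ODECO). *)

theory Defs
  imports "HOL-Analysis.Analysis"
begin

text \<open>A k-th order tensor over index type 'n is represented by its entry function
  on index lists (only lists of length k are meaningful).\<close>

definition tpow :: "real^'n \<Rightarrow> ('n list \<Rightarrow> real)" where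
  "tpow v = (\<lambda>is. prod_list (map (\<lambda>i. v $ i) is))"

definition tensor_apply :: "('n::finite list \<Rightarrow> real) \<Rightarrow> nat \<Rightarrow> real^'n \<Rightarrow> real^'n" where
  "tensor_apply A k x =
     (\<chi> i. \<Sum>js\<in>{js. length js = k - 1}. A (i # js) * prod_list (map (\<lambda>j. x $ j) js))"

definition outer :: "real^'n \<Rightarrow> real^'n \<Rightarrow> real^'n^'n" where
  "outer v w = (\<chi> i j. v $ i * w $ j)"

end

theory Submission
  imports Defs
begin

text \<open>In the orthonormal frame \<open>v\<^sub>r\<close> both the matrix \<open>K\<close> and the tensor \<open>\<A>\<close> act diagonally,
  so each modal coordinate \<open>y\<^sub>r = v\<^sub>r \<bullet> x\<close> solves the scalar Bernoulli equation
  \<open>y' = \<kappa> y + \<lambda> y\<^sup>p\<^sup>+\<^sup>1\<close>. Where \<open>y \<noteq> 0\<close>, the substitution \<open>u = y\<^sup>-\<^sup>p\<close> turns it into the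
  linear equation \<open>u' = -p\<kappa> u - p\<lambda>\<close>, which is solved explicitly; since \<open>y\<close> cannot change sign
  on an interval where it does not vanish, \<open>y\<close> is recovered from \<open>u\<close> as the real root
  \<open>y = y\<^sub>0 (y\<^sub>0\<^sup>p u)\<^sup>-\<^sup>1\<^sup>/\<^sup>p\<close>.\<close>

lemma inner_orthonormal_sum:
  fixes v :: "'r::finite \<Rightarrow> 'a::real_inner"
  assumes orthonormal: "\<And>i j. v i \<bullet> v j = (if i = j then 1 else 0)"
  shows "v s \<bullet> (\<Sum>r\<in>UNIV. c r *\<^sub>R v r) = c s"
  by (simp add: inner_sum_right orthonormal if_distrib[of "(*) _"] cong: if_cong)

lemma orthonormal_expansion:
  fixes v :: "'n::finite \<Rightarrow> real^'n"
  assumes orthonormal: "\<And>i j. v i \<bullet> v j = (if i = j then 1 else 0)"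
  shows "x = (\<Sum>r\<in>UNIV. (v r \<bullet> x) *\<^sub>R v r)"
proof -
  define V :: "real^'n^'n" where "V = (\<chi> r. v r)"
  have "V ** transpose V = (\<chi> i j. v i \<bullet> v j)"
    by (simp add: V_def vec_eq_iff matrix_matrix_mult_def transpose_def inner_vec_def)
  also have "\<dots> = mat 1"
    by (simp add: orthonormal mat_def)
  finally have "V ** transpose V = mat 1" .
  then have "transpose V ** V = mat 1" using matrix_left_right_inverse by blast
  then have "x = transpose V *v (V *v x)" by (simp add: matrix_vector_mul_assoc)
  also have "\<dots> = (\<Sum>r\<in>UNIV. (v r \<bullet> x) *\<^sub>R v r)"
    by (simp add: V_def vec_eq_iff matrix_vector_mult_def transpose_def inner_vec_def
        sum_component mult_ac)
  finally show ?thesis .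
qed

lemma prod_list_map_mult:
  fixes f g :: "'a \<Rightarrow> 'b::comm_monoid_mult"
  shows "prod_list (map (\<lambda>j. f j * g j) js) = prod_list (map f js) * prod_list (map g js)"
  by (induction js) (simp_all add: mult_ac)

lemma sum_prod_list_words:
  fixes f :: "'a::finite \<Rightarrow> 'b::comm_semiring_1"
  shows "(\<Sum>js\<in>{js. length js = m}. prod_list (map f js)) = sum f UNIV ^ m"
proof (induction m)
  case 0
  then show ?case by simp
next
  case (Suc m)
  have words: "{js. length js = Suc m} = (\<lambda>(js, j). j # js) ` ({js. length js = m} \<times> UNIV)"
    using lists_length_Suc_eq[of UNIV m] by simp
  have "(\<Sum>js\<in>{js. length js = Suc m}. prod_list (map f js))
      = (\<Sum>(js, j)\<in>{js. length js = m} \<times> UNIV. prod_list (map f js) * f j)"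
    unfolding words sum.reindex[OF inj_split_Cons] by (simp add: case_prod_unfold mult.commute)
  also have "\<dots> = (\<Sum>js\<in>{js. length js = m}. prod_list (map f js)) * sum f UNIV"
    by (simp add: sum_product sum.cartesian_product)
  finally show ?case by (simp add: Suc mult.commute)
qed

lemma tensor_apply_tpow: "tensor_apply (tpow v) k x = (v \<bullet> x) ^ (k - 1) *\<^sub>R v"
proof -
  have "(\<Sum>js\<in>{js. length js = k - 1}. tpow v (i # js) * prod_list (map (\<lambda>j. x $ j) js))
      = v $ i * (\<Sum>js\<in>{js. length js = k - 1}. prod_list (map (\<lambda>j. v $ j * x $ j) js))" for i
    by (simp add: tpow_def prod_list_map_mult sum_distrib_left mult.assoc)
  then show ?thesis
    by (simp add: tensor_apply_def vec_eq_iff sum_prod_list_words inner_vec_def mult.commute)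
qed

lemma tensor_apply_sum:
  "tensor_apply (\<lambda>is. \<Sum>r\<in>S. A r is) k x = (\<Sum>r\<in>S. tensor_apply (A r) k x)"
  by (simp add: tensor_apply_def vec_eq_iff sum_distrib_right sum.swap[of _ S])

lemma tensor_apply_scale: "tensor_apply (\<lambda>is. c * A is) k x = c *\<^sub>R tensor_apply A k x"
  by (simp add: tensor_apply_def vec_eq_iff sum_distrib_left mult.assoc)

lemma outer_mult_vector: "outer v w *v x = (w \<bullet> x) *\<^sub>R v"
  by (simp add: outer_def vec_eq_iff matrix_vector_mult_def inner_vec_def sum_distrib_left mult_ac)

lemma sum_matrix_vector_mult: "(\<Sum>r\<in>S. M r) *v x = (\<Sum>r\<in>S. M r *v x)"
  by (induction S rule: infinite_finite_induct) (simp_all add: matrix_vector_mult_add_rdistrib)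

lemma odeco_vector_field:
  fixes v :: "'r::finite \<Rightarrow> real^'n::finite"
  shows "(\<Sum>r\<in>UNIV. kap r *\<^sub>R outer (v r) (v r)) *v x
           + tensor_apply (\<lambda>is. \<Sum>r\<in>UNIV. lam r * tpow (v r) is) k x
         = (\<Sum>r\<in>UNIV. (kap r * (v r \<bullet> x) + lam r * (v r \<bullet> x) ^ (k - 1)) *\<^sub>R v r)"
  by (simp add: sum_matrix_vector_mult scaleR_matrix_vector_assoc[symmetric] outer_mult_vector
      tensor_apply_sum tensor_apply_scale tensor_apply_tpow sum.distrib scaleR_add_left)

lemma odeco_modal_has_derivative:
  fixes v :: "'r::finite \<Rightarrow> real^'n::finite"
  assumes orthonormal: "\<And>i j. v i \<bullet> v j = (if i = j then 1 else 0)"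
    and ode: "(x has_vector_derivative
        (\<Sum>r\<in>UNIV. kap r *\<^sub>R outer (v r) (v r)) *v x t
          + tensor_apply (\<lambda>is. \<Sum>r\<in>UNIV. lam r * tpow (v r) is) k (x t)) F"
  shows "((\<lambda>s. v r \<bullet> x s) has_real_derivative
           kap r * (v r \<bullet> x t) + lam r * (v r \<bullet> x t) ^ (k - 1)) F"
  using bounded_linear.has_vector_derivative[OF bounded_linear_inner_right ode, of "v r"]
  unfolding odeco_vector_field inner_orthonormal_sum[OF orthonormal]
    has_real_derivative_iff_has_vector_derivative .

lemma continuous_nonvanishing_same_sign:
  fixes y :: "real \<Rightarrow> real"
  assumes J: "is_interval J" and cont: "continuous_on J y" and nz: "\<forall>t\<in>J. y t \<noteq> 0"
    and s: "s \<in> J" and t: "t \<in> J"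
  shows "y s * y t > 0"
proof -
  have "is_interval (y ` J)"
    using J cont connected_continuous_image is_interval_connected_1 by blast
  moreover have "0 \<notin> y ` J" using nz by auto
  ultimately have "\<not> (y s \<le> 0 \<and> 0 \<le> y t) \<and> \<not> (y t \<le> 0 \<and> 0 \<le> y s)"
    using s t unfolding is_interval_1 by blast
  then show ?thesis by (simp add: zero_less_mult_iff) linarith
qed

lemma affine_ode_solution:
  fixes u :: "real \<Rightarrow> real"
  assumes J: "is_interval J" "0 \<in> J" and a: "a \<noteq> 0"
    and D: "\<And>s. s \<in> J \<Longrightarrow> (u has_real_derivative a * u s + b) (at s within J)"
    and t: "t \<in> J"
  shows "u t = (u 0 + b / a) * exp (a * t) - b / a"
proof -
  have "\<exists>C. \<forall>s\<in>J. (u s + b / a) * exp (- a * s) = C"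
  proof (rule has_field_derivative_zero_constant)
    show "convex J" using J by (simp add: is_interval_convex_1)
    fix s assume "s \<in> J"
    show "((\<lambda>s. (u s + b / a) * exp (- a * s)) has_real_derivative 0) (at s within J)"
      by (rule derivative_eq_intros D[OF \<open>s \<in> J\<close>] refl)+ (use a in \<open>simp add: field_simps\<close>)
  qed
  then have "(u t + b / a) * exp (- a * t) = u 0 + b / a" using J t by force
  then show ?thesis by (simp add: exp_minus field_simps)
qed

lemma constant_derivative_solution:
  fixes u :: "real \<Rightarrow> real"
  assumes J: "is_interval J" "0 \<in> J"
    and D: "\<And>s. s \<in> J \<Longrightarrow> (u has_real_derivative b) (at s within J)"
    and t: "t \<in> J"
  shows "u t = u 0 + b * t"
proof -
  have "\<exists>C. \<forall>s\<in>J. u s - b * s = C"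
  proof (rule has_field_derivative_zero_constant)
    show "convex J" using J by (simp add: is_interval_convex_1)
    fix s assume "s \<in> J"
    show "((\<lambda>s. u s - b * s) has_real_derivative 0) (at s within J)"
      by (rule derivative_eq_intros D[OF \<open>s \<in> J\<close>] refl)+ simp
  qed
  then have "u t - b * t = u 0" using J t by force
  then show ?thesis by simp
qed

lemma bernoulli_substitution_has_derivative:
  fixes y :: "real \<Rightarrow> real"
  assumes D: "(y has_real_derivative c * y t + l * y t ^ Suc p) (at t within J)"
    and nz: "y t \<noteq> 0"
  shows "((\<lambda>s. inverse (y s ^ p)) has_real_derivative
           - real p * c * inverse (y t ^ p) - real p * l) (at t within J)"
proof (cases p)
  case 0
  then show ?thesis by simp
next
  case (Suc q)
  show ?thesis
    by (rule derivative_eq_intros D refl | simp add: nz)+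
       (use nz Suc in \<open>simp add: field_simps\<close>)
qed

lemma power_ratio_powr_root:
  fixes y0 y :: real
  assumes p: "p > 0" and same_sign: "y0 * y > 0"
  shows "y = y0 * ((y0 / y) ^ p) powr (- 1 / real p)"
proof -
  have q: "y0 / y > 0" using same_sign by (simp add: zero_less_divide_iff zero_less_mult_iff)
  then have "((y0 / y) ^ p) powr (- 1 / real p) = (y0 / y) powr (-1)"
    using p by (simp add: powr_realpow[symmetric] powr_powr)
  also have "\<dots> = y / y0" using q by (simp add: powr_neg_one del: powr_neg_one')
  finally show ?thesis using same_sign by auto
qed

text \<open>The bracketed term of the explicit solution; it equals \<open>y\<^sub>0\<^sup>p u(t)\<close> for \<open>u = y\<^sup>-\<^sup>p\<close>.\<close>

definition bernoulli_bracket :: "nat \<Rightarrow> real \<Rightarrow> real \<Rightarrow> real \<Rightarrow> real \<Rightarrow> real" where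
  "bernoulli_bracket p c l y0 t =
     (if c = 0 then 1 - real p * l * y0 ^ p * t
      else exp (- real p * c * t) - l / c * y0 ^ p * (1 - exp (- real p * c * t)))"

lemma bernoulli_ode_solution:
  fixes y :: "real \<Rightarrow> real"
  assumes J: "is_interval J" "0 \<in> J" and p: "p > 0"
    and D: "\<And>s. s \<in> J \<Longrightarrow> (y has_real_derivative c * y s + l * y s ^ Suc p) (at s within J)"
    and nz: "\<forall>s\<in>J. y s \<noteq> 0" and t: "t \<in> J"
  shows "bernoulli_bracket p c l (y 0) t > 0
    \<and> y t = y 0 * bernoulli_bracket p c l (y 0) t powr (- 1 / real p)"
proof -
  define u where "u s = inverse (y s ^ p)" for s
  have Du: "(u has_real_derivative (- real p * c) * u s + - real p * l) (at s within J)"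
    if "s \<in> J" for s
    using bernoulli_substitution_has_derivative[OF D[OF that]] nz that
    unfolding u_def by simp
  have y0: "y 0 \<noteq> 0" using nz J by auto
  have "bernoulli_bracket p c l (y 0) t = y 0 ^ p * u t"
  proof (cases "c = 0")
    case True
    then show ?thesis
      using constant_derivative_solution[OF J _ t, of u "- real p * l"] Du y0
      by (simp add: bernoulli_bracket_def u_def field_simps)
  next
    case False
    then have "- real p * c \<noteq> 0" using p by simp
    then have ut: "u t = (u 0 + l / c) * exp (- real p * c * t) - l / c"
      using affine_ode_solution[OF J _ Du t] p by simp
    show ?thesis
      unfolding ut using False y0 by (simp add: bernoulli_bracket_def u_def field_simps)
  qed
  also have "\<dots> = (y 0 / y t) ^ p" by (simp add: u_def field_simps)
  finally have bracket: "bernoulli_bracket p c l (y 0) t = (y 0 / y t) ^ p" .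
  have "continuous_on J y"
    using D DERIV_continuous continuous_on_eq_continuous_within by blast
  then have "y 0 * y t > 0"
    using continuous_nonvanishing_same_sign J nz t by blast
  then show ?thesis
    unfolding bracket using power_ratio_powr_root[OF p]
    by (auto simp: zero_less_divide_iff zero_less_mult_iff)
qed

theorem theorem1:
  fixes k :: nat
    and v :: "'n::finite \<Rightarrow> real^'n"
    and lam kap :: "'n \<Rightarrow> real"
    and A :: "'n list \<Rightarrow> real"
    and K :: "real^'n^'n"
    and x :: "real \<Rightarrow> real^'n"
    and I :: "real set"
  assumes k3: "k \<ge> 3"
    and orthonormal: "\<And>i j. v i \<bullet> v j = (if i = j then 1 else 0)"
    and A_def: "A = (\<lambda>is. \<Sum>r\<in>UNIV. lam r * tpow (v r) is)"
    and K_def: "K = (\<Sum>r\<in>UNIV. kap r *\<^sub>R outer (v r) (v r))"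
    and I_int: "is_interval I" and I0: "0 \<in> I"
    and ode: "\<And>t. t \<in> I \<Longrightarrow>
        (x has_vector_derivative (K *v x t + tensor_apply A k (x t))) (at t within I)"
  shows "(\<forall>r. \<forall>t\<in>I. ((\<lambda>s. v r \<bullet> x s) has_real_derivative
              (kap r * (v r \<bullet> x t) + lam r * (v r \<bullet> x t) ^ (k - 1))) (at t within I))
    \<and> (\<forall>t\<in>I. x t = (\<Sum>r\<in>UNIV. (v r \<bullet> x t) *\<^sub>R v r))
    \<and> (\<forall>r J. kap r \<noteq> 0 \<and> is_interval J \<and> 0 \<in> J \<and> J \<subseteq> I \<and> (\<forall>t\<in>J. v r \<bullet> x t \<noteq> 0) \<longrightarrow>
         (\<forall>t\<in>J.
            let y0 = v r \<bullet> x 0; p = k - 2;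
                B = exp (- real p * kap r * t)
                    - lam r / kap r * y0 ^ p * (1 - exp (- real p * kap r * t))
            in B > 0 \<and> v r \<bullet> x t = y0 * B powr (- 1 / real p)))
    \<and> (\<forall>r J. kap r = 0 \<and> is_interval J \<and> 0 \<in> J \<and> J \<subseteq> I \<and> (\<forall>t\<in>J. v r \<bullet> x t \<noteq> 0) \<longrightarrow>
         (\<forall>t\<in>J.
            let y0 = v r \<bullet> x 0; p = k - 2;
                B = 1 - real p * lam r * y0 ^ p * t
            in B > 0 \<and> v r \<bullet> x t = y0 * B powr (- 1 / real p)))"
proof -
  have modal: "((\<lambda>s. v r \<bullet> x s) has_real_derivative
      kap r * (v r \<bullet> x t) + lam r * (v r \<bullet> x t) ^ (k - 1)) (at t within I)" if "t \<in> I" for r t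
    using odeco_modal_has_derivative[OF orthonormal ode[OF that, unfolded K_def A_def]] .
  have explicit: "bernoulli_bracket (k - 2) (kap r) (lam r) (v r \<bullet> x 0) t > 0
      \<and> v r \<bullet> x t = (v r \<bullet> x 0)
          * bernoulli_bracket (k - 2) (kap r) (lam r) (v r \<bullet> x 0) t powr (- 1 / real (k - 2))"
    if J: "is_interval J" "0 \<in> J" "J \<subseteq> I" and nz: "\<forall>t\<in>J. v r \<bullet> x t \<noteq> 0" and t: "t \<in> J"
    for r J t
  proof (rule bernoulli_ode_solution[OF J(1,2) _ _ nz t])
    show "k - 2 > 0" using k3 by simp
    have "k - 1 = Suc (k - 2)" using k3 by simp
    then show "((\<lambda>s. v r \<bullet> x s) has_real_derivative
        kap r * (v r \<bullet> x s) + lam r * (v r \<bullet> x s) ^ Suc (k - 2)) (at s within J)" if "s \<in> J" for s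
      using DERIV_subset[OF modal J(3)] J(3) that by auto
  qed
  show ?thesis
    unfolding Let_def
    by (intro conjI allI impI ballI modal orthonormal_expansion[OF orthonormal])
      (auto dest: explicit simp: bernoulli_bracket_def)
qed

end
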